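(* The map $\phi$ from the poset $\mathcal{FP}$ of nonempty faces of $V_O$ (ordered by inclusion) to the poset $\mathcal{SC}$, given by $\phi(F)=\bigcup_{\lambda\in\Xi_1,\ F\subseteq H_\lambda}\mathrm{supp}(\lambda)$, is injective and order-preserving: if $F_1\subseteq F_2$ then $\phi(F_1)\preceq\phi(F_2)$.
   Context: $G=(V,E)$ is a finite connected graph, possibly with parallel edges and loops; $\mathbb E$ is the set of oriented edges ($e$ and its reverse $\bar e$). Real $1$-chains $x:\mathbb E\to\mathbb R$ satisfy $x_{\bar e}=-x_e$; $\langle x,y\rangle=\sum_{e\in E}x_ey_e$, $q(x)=\langle x,x\rangle$. A flow satisfies $\sum_{e\text{ with tail }v}x_e=0$ at every vertex $v$; $H$ is the space of real flows and $\Lambda$ the lattice of integer flows. $V_O=\{x\in H: q(x)\le q(x-\mu)\ \forall\mu\in\Lambda\}$. For a flow $x$, $\mathrm{supp}(x)=\{e\in\mathbb E: x_e>0\}$. A circuit is an orientation of a cycle as a directed cycle; $x^C_e=1$ if $e\in C$, $-1$ if $\bar e\in C$, $0$ otherwise. $\Xi_1=\{x^C: C\text{ a circuit}\}$; for $\lambda\in\Xi_1$, $H_\lambda=\{x\in H: 2\langle x,\lambda\rangle=q(\lambda)\}$. $\mathcal{SC}$ is the set of pairs $(H',D)$ with $H'$ a subgraph of $G$ (identified with its edge set) and $D$ a strongly connected orientation of $H'$ (on each component any two vertices are joined by directed paths both ways), ordered by $(H_1,D_1)\preceq(H_2,D_2)$ iff $H_2\subseteq H_1$ and $D_2$ is the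 restriction of $D_1$ to $H_2$. *)

theory Defs
  imports "HOL-Analysis.Analysis"
begin

text \<open>Graph G: vertices = finite type 'v (V = UNIV), edges = finite type 'e (E = UNIV),
  each edge e with a reference orientation from tail e to head e (loops and parallel
  edges allowed). Oriented edges are pairs (e, True) = e and (e, False) = reversed e.
  Real 1-chains are vectors x :: real^'e, x $ e being the value on the reference
  orientation; hence the inner product x \<bullet> y is \<Sum>e\<in>E. x_e y_e.\<close>

type_synonym 'e oedge = "'e \<times> bool"

definition otail :: "('e \<Rightarrow> 'v) \<Rightarrow> ('e \<Rightarrow> 'v) \<Rightarrow> 'e oedge \<Rightarrow> 'v" where
  "otail tail head d = (if snd d then tail (fst d) else head (fst d))"

definition ohead :: "('e \<Rightarrow> 'v) \<Rightarrow> ('e \<Rightarrow> 'v) \<Rightarrow> 'e oedge \<Rightarrow> 'v" where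
  "ohead tail head d = (if snd d then head (fst d) else tail (fst d))"

definition rev_oedge :: "'e oedge \<Rightarrow> 'e oedge" where
  "rev_oedge d = (fst d, \<not> snd d)"

definition ochain :: "real^'e \<Rightarrow> 'e oedge \<Rightarrow> real" where
  "ochain x d = (if snd d then x $ fst d else - (x $ fst d))"

definition graph_connected :: "('e \<Rightarrow> 'v) \<Rightarrow> ('e \<Rightarrow> 'v) \<Rightarrow> bool" where
  "graph_connected tail head \<longleftrightarrow>
     (\<forall>u v. (u, v) \<in> ({(tail e, head e) | e. True} \<union> {(head e, tail e) | e. True})\<^sup>*)"

definition is_flow :: "('e::finite \<Rightarrow> 'v) \<Rightarrow> ('e \<Rightarrow> 'v) \<Rightarrow> real^'e \<Rightarrow> bool" where
  "is_flow tail head x \<longleftrightarrow> (\<forall>v. (\<Sum>d\<in>{d. otail tail head d = v}. ochain x d) = 0)"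

definition flows :: "('e::finite \<Rightarrow> 'v) \<Rightarrow> ('e \<Rightarrow> 'v) \<Rightarrow> (real^'e) set" where
  "flows tail head = {x. is_flow tail head x}"

definition int_flows :: "('e::finite \<Rightarrow> 'v) \<Rightarrow> ('e \<Rightarrow> 'v) \<Rightarrow> (real^'e) set" where
  "int_flows tail head = {x \<in> flows tail head. \<forall>e. x $ e \<in> \<int>}"

definition qf :: "real^'e \<Rightarrow> real" where
  "qf x = x \<bullet> x"

definition voronoi_cell :: "('e::finite \<Rightarrow> 'v) \<Rightarrow> ('e \<Rightarrow> 'v) \<Rightarrow> (real^'e) set" where
  "voronoi_cell tail head = {x \<in> flows tail head. \<forall>\<mu>\<in>int_flows tail head. qf x \<le> qf (x - \<mu>)}"

definition supp :: "real^'e \<Rightarrow> 'e oedge set" where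
  "supp x = {d. ochain x d > 0}"

text \<open>A circuit: orientation of a cycle as a directed cycle, given as the set of its
  oriented edges d_0,...,d_{k-1} (k \<ge> 1) with distinct underlying edges, distinct
  tails, and head d_i = tail d_{(i+1) mod k}. Loops give circuits of length 1.\<close>
definition is_circuit :: "('e \<Rightarrow> 'v) \<Rightarrow> ('e \<Rightarrow> 'v) \<Rightarrow> 'e oedge set \<Rightarrow> bool" where
  "is_circuit tail head C \<longleftrightarrow>
     (\<exists>ds. length ds \<ge> 1 \<and> distinct (map fst ds) \<and> distinct (map (otail tail head) ds) \<and>
        (\<forall>i<length ds. ohead tail head (ds ! i) = otail tail head (ds ! ((i + 1) mod length ds))) \<and>
        C = set ds)"

definition circuit_vec :: "'e oedge set \<Rightarrow> real^'e" where
  "circuit_vec C = (\<chi> e. if (e, True) \<in> C then 1 else if (e, False) \<in> C then -1 else 0)"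

definition Xi1 :: "('e::finite \<Rightarrow> 'v) \<Rightarrow> ('e \<Rightarrow> 'v) \<Rightarrow> (real^'e) set" where
  "Xi1 tail head = {circuit_vec C | C. is_circuit tail head C}"

definition Hlam :: "('e::finite \<Rightarrow> 'v) \<Rightarrow> ('e \<Rightarrow> 'v) \<Rightarrow> real^'e \<Rightarrow> (real^'e) set" where
  "Hlam tail head lam = {x \<in> flows tail head. 2 * (x \<bullet> lam) = qf lam}"

definition FP :: "('e::finite \<Rightarrow> 'v) \<Rightarrow> ('e \<Rightarrow> 'v) \<Rightarrow> (real^'e) set set" where
  "FP tail head = {F. F face_of voronoi_cell tail head \<and> F \<noteq> {}}"

text \<open>SC: pairs (S, D), S a set of edges (the subgraph H'), D a set of oriented edges
  which is an orientation of S that is strongly connected on each component of S.\<close>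
definition strongly_connected_orientation ::
    "('e \<Rightarrow> 'v) \<Rightarrow> ('e \<Rightarrow> 'v) \<Rightarrow> 'e set \<Rightarrow> 'e oedge set \<Rightarrow> bool" where
  "strongly_connected_orientation tail head S D \<longleftrightarrow>
     (\<forall>d\<in>D. fst d \<in> S) \<and>
     (\<forall>e\<in>S. ((e, True) \<in> D) \<noteq> ((e, False) \<in> D)) \<and>
     (\<forall>u v. (u, v) \<in> ({(tail e, head e) | e. e \<in> S} \<union> {(head e, tail e) | e. e \<in> S})\<^sup>* \<longrightarrow>
        (u, v) \<in> {(otail tail head d, ohead tail head d) | d. d \<in> D}\<^sup>* \<and>
        (v, u) \<in> {(otail tail head d, ohead tail head d) | d. d \<in> D}\<^sup>*)"

definition SC :: "('e \<Rightarrow> 'v) \<Rightarrow> ('e \<Rightarrow> 'v) \<Rightarrow> ('e set \<times> 'e oedge set) set" where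
  "SC tail head = {(S, D). strongly_connected_orientation tail head S D}"

definition sc_le :: "('e set \<times> 'e oedge set) \<Rightarrow> ('e set \<times> 'e oedge set) \<Rightarrow> bool" where
  "sc_le P1 P2 \<longleftrightarrow> fst P2 \<subseteq> fst P1 \<and> snd P2 = {d \<in> snd P1. fst d \<in> fst P2}"

definition phi :: "('e::finite \<Rightarrow> 'v) \<Rightarrow> ('e \<Rightarrow> 'v) \<Rightarrow> (real^'e) set \<Rightarrow> ('e set \<times> 'e oedge set)" where
  "phi tail head F =
     (let D = \<Union>{supp lam | lam. lam \<in> Xi1 tail head \<and> F \<subseteq> Hlam tail head lam} in (fst ` D, D))"

end

theory Submission
  imports Defs
begin

text \<open>
  Strategy.  (1) Circuits: x^C is an integer flow with q(x^C) = |C| and <x, x^C> the sum of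
  x over C.  (2) With edge costs 1 - 2 x_d, the circuit inequalities 2 <x, x^C> <= q(x^C) say
  that no circuit, hence (decomposing) no closed walk, has negative cost; shortest walks then
  give a potential with nonnegative reduced costs, and summing the reduced costs against an
  integer flow yields 2 <x, mu> <= q(mu).  So V_O is the polyhedron in the flow space cut out by
  the circuit inequalities, and for such a potential a circuit inequality is tight at x iff
  all reduced costs on the circuit vanish.  (3) General polyhedral facts: a nonempty face has a
  point tight exactly on the inequalities tight on the face, and is determined by that set.
  (4) Hence phi(F) carries zero reduced costs, so contains no opposite pair, is a union of
  circuits and therefore strongly connected, and its circuits are exactly the tight ones.
\<close>

lemma not_distinct_decomp_map:
  assumes "\<not> distinct (map f ws)"
  obtains A a B b C where "ws = A @ a # B @ b # C" "f a = f b"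
proof -
  obtain A c B C where "map f ws = A @ [c] @ B @ [c] @ C"
    using not_distinct_decomp[OF assms] by blast
  then show ?thesis
    using that by (auto simp: map_eq_append_conv append_eq_map_conv Cons_eq_map_conv)
qed

text \<open>For an integer m and a real s with |s| <= 1 we have m s <= m^2; this is the
  per-edge inequality behind the integer-flow bound.\<close>
lemma int_mult_le_square:
  fixes m s :: real
  assumes "m \<in> \<int>" "\<bar>s\<bar> \<le> 1"
  shows "m * s \<le> m * m"
proof -
  have "m = 0 \<or> 1 \<le> \<bar>m\<bar>"
    using assms(1) by (elim Ints_cases) (simp, linarith)
  then have "\<bar>m\<bar> * 1 \<le> \<bar>m\<bar> * \<bar>m\<bar>"
    by (elim disjE) (simp, rule mult_left_mono, simp_all)
  moreover have "m * s \<le> \<bar>m\<bar> * 1"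
    using assms(2) abs_mult[of m s] abs_ge_self[of "m * s"] mult_left_mono[of "\<bar>s\<bar>" 1 "\<bar>m\<bar>"]
    by linarith
  ultimately show ?thesis by (simp add: abs_mult_self_eq)
qed

lemma card_fiber_inj_on:
  assumes "finite C" "inj_on f C"
  shows "card {d\<in>C. f d = v} = of_bool (v \<in> f ` C)"
proof (cases "v \<in> f ` C")
  case True
  then obtain d where d: "d \<in> C" "f d = v" by blast
  then have "{d\<in>C. f d = v} = {d}" using assms(2) by (auto dest: inj_onD)
  then show ?thesis using True by simp
next
  case False
  then show ?thesis by (auto simp: card_eq_0_iff)
qed

text \<open>A point of
  a nonempty face with the fewest tight inequalities is tight exactly for the inequalities
  tight on the whole face (a midpoint argument).\<close>
lemma face_point_with_fewest_tight_constraints: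
  fixes F P :: "'a::real_inner set" and c :: "'a \<Rightarrow> real"
  assumes A: "finite A" and F: "F face_of P" "F \<noteq> {}"
    and P: "\<And>x a. x \<in> P \<Longrightarrow> a \<in> A \<Longrightarrow> x \<bullet> a \<le> c a"
  shows "\<exists>x\<in>F. {a\<in>A. x \<bullet> a = c a} = {a\<in>A. \<forall>y\<in>F. y \<bullet> a = c a}"
proof -
  define T where "T x = {a\<in>A. x \<bullet> a = c a}" for x
  have fin: "finite (T x)" for x using A unfolding T_def by simp
  have FP: "F \<subseteq> P" and cvx: "convex F" using F(1) face_of_imp_subset face_of_imp_convex by blast+
  obtain x where x: "x \<in> F" and least: "\<And>y. y \<in> F \<Longrightarrow> card (T x) \<le> card (T y)"
    using F(2) ex_has_least_nat[of "\<lambda>y. y \<in> F" _ "\<lambda>y. card (T y)"] by blast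
  have "T x \<subseteq> T y" if y: "y \<in> F" for y
  proof -
    define m where "m = (1/2) *\<^sub>R x + (1/2) *\<^sub>R y"
    have m: "m \<in> F" unfolding m_def by (rule convexD[OF cvx x y]) auto
    have "T m \<subseteq> T x \<inter> T y"
    proof
      fix a assume "a \<in> T m"
      moreover have "2 * (m \<bullet> a) = x \<bullet> a + y \<bullet> a" unfolding m_def by (simp add: inner_add_left)
      moreover have "x \<bullet> a \<le> c a" "y \<bullet> a \<le> c a" using P FP x y \<open>a \<in> T m\<close> unfolding T_def by auto
      ultimately show "a \<in> T x \<inter> T y" unfolding T_def by auto
    qed
    moreover have "T m = T x"
      using card_subset_eq[OF fin] least[OF m] card_mono[OF fin] \<open>T m \<subseteq> T x \<inter> T y\<close>
      by (metis Int_subset_iff le_antisym)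
    ultimately show ?thesis by blast
  qed
  then have "T x = {a\<in>A. \<forall>y\<in>F. y \<bullet> a = c a}" using x unfolding T_def by blast
  then show ?thesis using x unfolding T_def by blast
qed

text \<open>Conversely, if x lies in a face F, every point y of the polyhedron that is tight
  wherever x is tight lies in F: x is interior to a segment from y to a point z of the
  polyhedron slightly beyond x.\<close>
lemma face_contains_points_tight_where_member_is:
  fixes L :: "'a::real_inner set" and c :: "'a \<Rightarrow> real"
  assumes L: "affine L" and A: "finite A"
    and P: "P = {x\<in>L. \<forall>a\<in>A. x \<bullet> a \<le> c a}"
    and F: "F face_of P" and x: "x \<in> F" and y: "y \<in> P"
    and tight: "\<And>a. a \<in> A \<Longrightarrow> x \<bullet> a = c a \<Longrightarrow> y \<bullet> a = c a"
  shows "y \<in> F"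
proof (cases "y = x")
  case True then show ?thesis using x by simp
next
  case False
  have xP: "x \<in> P" using F x face_of_imp_subset by blast
  define N where "N = {a\<in>A. x \<bullet> a \<noteq> c a}"
  define slack where "slack a = (c a - x \<bullet> a) / (\<bar>(x - y) \<bullet> a\<bar> + 1)" for a
  define eps where "eps = Min (insert 1 (slack ` N))"
  have slack_pos: "0 < slack a" if "a \<in> N" for a
    using that xP P unfolding N_def slack_def by (force intro: divide_pos_pos)
  have eps_pos: "0 < eps" unfolding eps_def using A slack_pos by (subst Min_gr_iff) (auto simp: N_def)
  have eps_le: "eps \<le> slack a" if "a \<in> N" for a unfolding eps_def using A that by (intro Min_le) (auto simp: N_def)
  define z where "z = (1 + eps) *\<^sub>R x + (- eps) *\<^sub>R y"
  have z_inner: "z \<bullet> a = x \<bullet> a + eps * ((x - y) \<bullet> a)" for a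
    unfolding z_def by (simp add: inner_diff_left algebra_simps)
  have "z \<in> P" unfolding P
  proof (intro CollectI conjI ballI)
    show "z \<in> L" unfolding z_def by (rule mem_affine[OF L]) (use xP y P in auto)
    fix a assume a: "a \<in> A"
    show "z \<bullet> a \<le> c a"
    proof (cases "a \<in> N")
      case True
      have "eps * ((x - y) \<bullet> a) \<le> eps * (\<bar>(x - y) \<bullet> a\<bar> + 1)"
        using eps_pos by (intro mult_left_mono) auto
      also have "\<dots> \<le> c a - x \<bullet> a"
        using eps_le[OF True] unfolding slack_def by (simp add: pos_le_divide_eq add_pos_nonneg)
      finally show ?thesis unfolding z_inner by simp
    next
      case False
      then show ?thesis using a tight unfolding z_inner N_def by (simp add: inner_diff_left)
    qed
  qed
  moreover have "x \<in> open_segment y z"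
    unfolding in_segment
  proof (intro conjI exI)
    show "y \<noteq> z"
    proof
      assume "y = z"
      then have "(1 + eps) *\<^sub>R (x - y) = 0" unfolding z_def by (simp add: algebra_simps)
      then show False using False eps_pos by simp
    qed
    show "0 < 1 / (1 + eps)" "1 / (1 + eps) < 1" using eps_pos by simp_all
    have "(1 - 1 / (1 + eps)) *\<^sub>R y + (1 / (1 + eps)) *\<^sub>R z = (1 / (1 + eps)) *\<^sub>R ((1 + eps) *\<^sub>R x)"
      using eps_pos unfolding z_def by (simp add: algebra_simps field_simps)
    then show "x = (1 - 1 / (1 + eps)) *\<^sub>R y + (1 / (1 + eps)) *\<^sub>R z" using eps_pos by simp
  qed
  ultimately show ?thesis using F x y unfolding face_of_def by blast
qed

lemma rev_oedge_simps [simp]: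
  "otail t h (rev_oedge d) = ohead t h d" "ohead t h (rev_oedge d) = otail t h d"
  "fst (rev_oedge d) = fst d" "rev_oedge (rev_oedge d) = d" "rev_oedge d \<noteq> d"
  by (auto simp: rev_oedge_def otail_def ohead_def prod_eq_iff)

lemma ochain_rev_oedge [simp]: "ochain x (rev_oedge d) = - ochain x d"
  by (simp add: rev_oedge_def ochain_def)

lemma inj_rev_oedge: "inj rev_oedge"
  by (metis injI rev_oedge_simps(4))

lemma rev_oedge_preimage: "{d. rev_oedge d \<in> C} = rev_oedge ` C"
  by (rule set_eqI) (metis image_iff mem_Collect_eq rev_oedge_simps(4))

lemma same_fst_imp_rev: "fst a = fst b \<Longrightarrow> a \<noteq> b \<Longrightarrow> b = rev_oedge a"
  by (cases a; cases b) (auto simp: rev_oedge_def)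

lemma sum_oedges: "(\<Sum>d\<in>UNIV. f d) = (\<Sum>e\<in>UNIV. f (e, True) + f (e, False))"
proof -
  have "(\<Sum>d\<in>UNIV. f d) = (\<Sum>d\<in>UNIV \<times> UNIV. f d)"
    by simp
  also have "\<dots> = (\<Sum>e\<in>UNIV. \<Sum>b\<in>UNIV. f (e, b))"
    by (subst sum.cartesian_product) simp
  finally show ?thesis by (simp add: UNIV_bool add.commute)
qed

lemma inner_as_oedge_sum: "x \<bullet> y = (\<Sum>d\<in>UNIV. ochain x d * ochain y d) / 2"
  unfolding sum_oedges by (simp add: ochain_def inner_vec_def sum_distrib_left[symmetric])

lemma qf_diff: "qf (x - y) = qf x - 2 * (x \<bullet> y) + qf y"
  unfolding qf_def by (simp add: inner_diff_left inner_diff_right inner_commute)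

text \<open>The edge cost 1 - 2 x_d. Circuit inequalities say that circuits have nonnegative
  total cost.\<close>
definition edge_cost :: "real^'e \<Rightarrow> 'e oedge \<Rightarrow> real" where
  "edge_cost x d = 1 - 2 * ochain x d"

lemma edge_cost_rev: "edge_cost x d + edge_cost x (rev_oedge d) = 2"
  by (simp add: edge_cost_def)

context
  fixes tail head :: "'e::finite \<Rightarrow> 'v::finite"
begin

abbreviation "ot \<equiv> otail tail head"
abbreviation "oh \<equiv> ohead tail head"

definition arcs :: "'e oedge set \<Rightarrow> ('v \<times> 'v) set" where
  "arcs D = {(ot d, oh d) | d. d \<in> D}"

lemma cyclic_list_reach:
  assumes succ: "\<forall>i<length ds. oh (ds ! i) = ot (ds ! ((i + 1) mod length ds))"
    and i: "i < length ds"
  shows "(ot (ds ! i), ot (ds ! ((i + k) mod length ds))) \<in> (arcs (set ds))\<^sup>*"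
proof (induction k)
  case 0 then show ?case using i by simp
next
  case (Suc k)
  define m where "m = (i + k) mod length ds"
  have m: "m < length ds" using i unfolding m_def by (intro mod_less_divisor) linarith
  then have "(ot (ds ! m), oh (ds ! m)) \<in> arcs (set ds)" unfolding arcs_def using nth_mem by blast
  moreover have "oh (ds ! m) = ot (ds ! ((i + Suc k) mod length ds))"
    using succ m unfolding m_def by (simp add: mod_Suc_eq)
  ultimately show ?case using Suc.IH unfolding m_def by (metis rtrancl.rtrancl_into_rtrancl)
qed

lemma circuit_cyclic_list:
  assumes "is_circuit tail head C"
  obtains ds where "C = set ds" "ds \<noteq> []" "distinct (map fst ds)" "distinct (map ot ds)"
    "\<forall>i<length ds. oh (ds ! i) = ot (ds ! ((i + 1) mod length ds))"
    "map oh ds = map ot (rotate1 ds)"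
proof -
  obtain ds where ds: "C = set ds" "ds \<noteq> []" "distinct (map fst ds)" "distinct (map ot ds)"
    and succ: "\<forall>i<length ds. oh (ds ! i) = ot (ds ! ((i + 1) mod length ds))"
    using assms unfolding is_circuit_def by fastforce
  moreover have "map oh ds = map ot (rotate1 ds)"
    by (rule nth_equalityI) (simp_all add: nth_rotate1 succ)
  ultimately show ?thesis using that by blast
qed

lemma circuit_basic:
  assumes "is_circuit tail head C"
  shows "finite C" "C \<noteq> {}" "inj_on fst C" "inj_on ot C" "inj_on oh C" "ot ` C = oh ` C"
proof -
  obtain ds where ds: "C = set ds" "ds \<noteq> []" "distinct (map fst ds)" "distinct (map ot ds)"
    and rot: "map oh ds = map ot (rotate1 ds)"
    using circuit_cyclic_list[OF assms] by blast
  show "finite C" "C \<noteq> {}" using ds by auto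
  show "inj_on fst C" "inj_on ot C" using ds by (simp_all add: distinct_map)
  have "distinct (map oh ds)" using ds(4) unfolding rot rotate1_map[symmetric] by simp
  then show "inj_on oh C" using ds by (simp add: distinct_map)
  have "oh ` C = set (map ot (rotate1 ds))" unfolding ds(1) rot[symmetric] by simp
  then show "ot ` C = oh ` C" using ds(1) by simp
qed

lemma circuit_back_path:
  assumes "is_circuit tail head C" "d \<in> C"
  shows "(oh d, ot d) \<in> (arcs C)\<^sup>*"
proof -
  obtain ds where ds: "C = set ds"
    and succ: "\<forall>i<length ds. oh (ds ! i) = ot (ds ! ((i + 1) mod length ds))"
    using circuit_cyclic_list[OF assms(1)] by blast
  define n where "n = length ds"
  obtain i where i: "i < n" "d = ds ! i" using assms(2) ds unfolding n_def by (auto simp: in_set_conv_nth)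
  define j where "j = (i + 1) mod n"
  have j: "j < n" using i unfolding j_def by simp
  have "(j + (n - 1)) mod n = (Suc i + (n - 1)) mod n"
    unfolding j_def by (simp add: mod_add_left_eq)
  also have "\<dots> = i" using i by simp
  finally have "(j + (n - 1)) mod n = i" .
  then have "(ot (ds ! j), ot d) \<in> (arcs C)\<^sup>*"
    using cyclic_list_reach[OF succ, of j "n - 1"] i j ds unfolding n_def by simp
  moreover have "oh d = ot (ds ! j)" using succ i unfolding j_def n_def by simp
  ultimately show ?thesis by simp
qed

lemma circuit_no_rev:
  assumes "is_circuit tail head C" "d \<in> C" shows "rev_oedge d \<notin> C"
  using inj_onD[OF circuit_basic(3)[OF assms(1)], of "rev_oedge d" d] assms(2) by auto

lemma ochain_circuit_vec:
  assumes "is_circuit tail head C"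
  shows "ochain (circuit_vec C) d = of_bool (d \<in> C) - of_bool (rev_oedge d \<in> C)"
proof -
  obtain e b where d: "d = (e, b)" by force
  show ?thesis
    using circuit_no_rev[OF assms, of "(e,True)"] circuit_no_rev[OF assms, of "(e,False)"]
    by (cases b; cases "(e,True)\<in>C"; cases "(e,False)\<in>C")
      (simp_all add: d ochain_def circuit_vec_def rev_oedge_def)
qed

lemma supp_circuit_vec:
  assumes "is_circuit tail head C" shows "supp (circuit_vec C) = C"
  using circuit_no_rev[OF assms] unfolding supp_def ochain_circuit_vec[OF assms] by fastforce

lemma inner_circuit_vec:
  assumes "is_circuit tail head C"
  shows "x \<bullet> circuit_vec C = (\<Sum>d\<in>C. ochain x d)"
proof -
  have "(\<Sum>d\<in>UNIV. ochain x d * of_bool (rev_oedge d \<in> C)) = (\<Sum>d\<in>rev_oedge ` C. ochain x d)"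
    by (simp add: sum_mult_of_bool_eq rev_oedge_preimage)
  also have "\<dots> = - (\<Sum>d\<in>C. ochain x d)"
    by (simp add: sum.reindex inj_on_subset[OF inj_rev_oedge] sum_negf)
  finally show ?thesis
    unfolding inner_as_oedge_sum ochain_circuit_vec[OF assms]
    by (simp add: right_diff_distrib sum_subtractf sum_mult_of_bool_eq)
qed

lemma qf_circuit_vec:
  assumes "is_circuit tail head C"
  shows "qf (circuit_vec C) = real (card C)"
  using circuit_no_rev[OF assms]
  by (simp add: qf_def inner_circuit_vec[OF assms] ochain_circuit_vec[OF assms])

text \<open>Circuit vectors are integer flows: at each vertex one edge of C leaves iff one
  enters.\<close>
lemma circuit_vec_int_flow:
  assumes "is_circuit tail head C"
  shows "circuit_vec C \<in> int_flows tail head"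
proof -
  have fin: "finite C" and inj: "inj_on ot C" "inj_on oh C" and eq: "ot ` C = oh ` C"
    using circuit_basic[OF assms] by auto
  have "{d. ot d = v} \<inter> {d. rev_oedge d \<in> C} = rev_oedge ` {d\<in>C. oh d = v}" for v
    unfolding rev_oedge_preimage by auto
  then have "card ({d. ot d = v} \<inter> {d. rev_oedge d \<in> C}) = card {d\<in>C. oh d = v}" for v
    by (simp add: card_image inj_on_subset[OF inj_rev_oedge])
  moreover have "{d. ot d = v} \<inter> {d. d \<in> C} = {d\<in>C. ot d = v}" for v by blast
  ultimately have "(\<Sum>d\<in>{d. ot d = v}. ochain (circuit_vec C) d) = 0" for v
    using card_fiber_inj_on[OF fin inj(1)] card_fiber_inj_on[OF fin inj(2)] eq
    by (simp add: ochain_circuit_vec[OF assms] sum_subtractf sum_of_bool_eq)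
  then show ?thesis
    unfolding int_flows_def flows_def is_flow_def by (auto simp: circuit_vec_def)
qed

lemma finite_Xi1: "finite (Xi1 tail head)"
  by (rule finite_subset[of _ "range circuit_vec"]) (auto simp: Xi1_def)

lemma strongly_connected_of_back_paths:
  assumes no_rev: "\<And>d. d \<in> D \<Longrightarrow> rev_oedge d \<notin> D"
    and back_path: "\<And>d. d \<in> D \<Longrightarrow> (oh d, ot d) \<in> (arcs D)\<^sup>*"
  shows "strongly_connected_orientation tail head (fst ` D) D"
proof -
  txt \<open>Mutual reachability ?P along D is transitive and contains every edge of the
    underlying undirected graph ?U, hence all of its reflexive-transitive closure.\<close>
  let ?U = "{(tail e, head e) | e. e \<in> fst ` D} \<union> {(head e, tail e) | e. e \<in> fst ` D}"
  let ?P = "{(a, b). (a, b) \<in> (arcs D)\<^sup>* \<and> (b, a) \<in> (arcs D)\<^sup>*}"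
  have arc: "(ot d, oh d) \<in> ?P" "(oh d, ot d) \<in> ?P" if "d \<in> D" for d
  proof -
    have "(ot d, oh d) \<in> arcs D" using that unfolding arcs_def by blast
    then show "(ot d, oh d) \<in> ?P" "(oh d, ot d) \<in> ?P" using back_path[OF that] by auto
  qed
  have "?U \<subseteq> ?P"
  proof
    fix q assume "q \<in> ?U"
    then obtain d where d: "d \<in> D" and q: "q = (tail (fst d), head (fst d)) \<or> q = (head (fst d), tail (fst d))"
      by blast
    have "q = (ot d, oh d) \<or> q = (oh d, ot d)"
      using q by (cases "snd d") (auto simp: otail_def ohead_def)
    then show "q \<in> ?P" using arc[OF d] by blast
  qed
  have mutual: "(u, v) \<in> ?P" if "(u, v) \<in> ?U\<^sup>*" for u v
    using that
  proof (induction rule: rtrancl_induct)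
    case (step y z)
    then show ?case using \<open>?U \<subseteq> ?P\<close> by (auto intro: rtrancl_trans)
  qed simp
  have orient: "((e, True) \<in> D) \<noteq> ((e, False) \<in> D)" if e: "e \<in> fst ` D" for e
  proof -
    obtain b where "(e, b) \<in> D" using e by force
    then show ?thesis using no_rev[of "(e, b)"] no_rev[of "(e, \<not> b)"] by (cases b) (auto simp: rev_oedge_def)
  qed
  show ?thesis
    unfolding strongly_connected_orientation_def using orient mutual unfolding arcs_def by auto
qed

lemma sc_le_of_subset:
  assumes no_rev: "\<And>d. d \<in> D1 \<Longrightarrow> rev_oedge d \<notin> D1" and sub: "D2 \<subseteq> D1"
  shows "sc_le (fst ` D1, D1) (fst ` D2, D2)"
  unfolding sc_le_def fst_conv snd_conv
proof (intro conjI)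
  show "fst ` D2 \<subseteq> fst ` D1" using sub by blast
  have "d \<in> D2" if "d \<in> D1" "d' \<in> D2" "fst d = fst d'" for d d'
    using that same_fst_imp_rev[of d d'] no_rev sub by blast
  then show "D2 = {d \<in> D1. fst d \<in> fst ` D2}" using sub by auto
qed

fun walk :: "'v \<Rightarrow> 'e oedge list \<Rightarrow> 'v \<Rightarrow> bool" where
  "walk u [] v \<longleftrightarrow> u = v"
| "walk u (d # ds) v \<longleftrightarrow> ot d = u \<and> walk (oh d) ds v"

lemma walk_append: "walk u (xs @ ys) v \<longleftrightarrow> (\<exists>m. walk u xs m \<and> walk m ys v)"
  by (induction xs arbitrary: u) auto

lemma walk_nth: "walk u ws v \<Longrightarrow> Suc i < length ws \<Longrightarrow> oh (ws ! i) = ot (ws ! Suc i)"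
proof (induction ws arbitrary: u i)
  case (Cons d ds)
  then show ?case by (cases i; cases ds) auto
qed simp

lemma walk_last: "walk u ws v \<Longrightarrow> ws \<noteq> [] \<Longrightarrow> oh (last ws) = v"
proof (induction ws arbitrary: u)
  case (Cons d ds) then show ?case by (cases ds) auto
qed simp

lemma walk_exists:
  assumes "graph_connected tail head"
  shows "\<exists>ws. walk u ws v"
proof -
  have "(u, v) \<in> ({(tail e, head e) | e. True} \<union> {(head e, tail e) | e. True})\<^sup>*"
    using assms unfolding graph_connected_def by blast
  then show ?thesis
  proof (induction rule: rtrancl_induct)
    case base show ?case using walk.simps(1) by blast
  next
    case (step y z)
    obtain ws where "walk u ws y" using step.IH by blast
    moreover obtain d where "ot d = y" "oh d = z"
    proof -
      obtain e where "(y, z) = (tail e, head e) \<or> (y, z) = (head e, tail e)"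
        using step.hyps(2) by blast
      then show ?thesis using that[of "(e, True)"] that[of "(e, False)"] by (auto simp: otail_def ohead_def)
    qed
    ultimately have "walk u (ws @ [d]) z" by (auto simp: walk_append)
    then show ?case by blast
  qed
qed

lemma closed_walk_split:
  assumes "walk u (A @ a # B @ b # C) u" "ot a = ot b"
  shows "walk (ot a) (a # B) (ot a)" "walk u (A @ b # C) u"
  using assms by (auto simp: walk_append)

lemma closed_walk_backtrack:
  assumes w: "walk u ws u" and dt: "distinct (map ot ws)" and df: "\<not> distinct (map fst ws)"
  obtains d where "ws = [d, rev_oedge d]"
proof -
  obtain A a B b C where ws: "ws = A @ a # B @ b # C" and ab: "fst a = fst b"
    using not_distinct_decomp_map[OF df] by blast
  have "a \<noteq> b" using dt ws by auto
  then have b: "b = rev_oedge a" using ab same_fst_imp_rev by blast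
  obtain m where A: "walk u A m" and a: "ot a = m" and B: "walk (oh a) B (ot b)"
    and C: "walk (oh b) C u"
    using w ws by (auto simp: walk_append)
  have fresh: "ot a \<notin> ot ` set (A @ B @ C)" "ot b \<notin> ot ` set (A @ B @ C)"
    using dt ws by auto
  have "B = []"
  proof (cases B)
    case (Cons c B')
    then have "ot c = ot b" "c \<in> set (A @ B @ C)" using B b by auto
    then show ?thesis using fresh(2) by (metis imageI)
  qed
  moreover have C_nil: "C = []"
  proof (cases C)
    case (Cons c C')
    then have "ot c = ot a" "c \<in> set (A @ B @ C)" using C b by auto
    then show ?thesis using fresh(1) by (metis imageI)
  qed
  moreover have "A = []"
  proof (cases A)
    case (Cons c A')
    then have "ot c = ot a" "c \<in> set (A @ B @ C)" using A C C_nil b by auto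
    then show ?thesis using fresh(1) by (metis imageI)
  qed
  ultimately show ?thesis using that ws b by simp
qed

lemma closed_walk_circuit:
  assumes w: "walk u ws u" and ne: "ws \<noteq> []"
    and dt: "distinct (map ot ws)" and df: "distinct (map fst ws)"
  shows "is_circuit tail head (set ws)"
  unfolding is_circuit_def
proof (intro exI conjI)
  show "1 \<le> length ws" "distinct (map fst ws)" "distinct (map ot ws)" "set ws = set ws"
    using ne dt df by (auto simp: Suc_le_eq)
  show "\<forall>i<length ws. oh (ws ! i) = ot (ws ! ((i + 1) mod length ws))"
  proof (intro allI impI)
    fix i assume i: "i < length ws"
    show "oh (ws ! i) = ot (ws ! ((i + 1) mod length ws))"
    proof (cases "Suc i < length ws")
      case True then show ?thesis using walk_nth[OF w] by simp
    next
      case False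
      then have "Suc i = length ws" using i by simp
      then have "i = length ws - 1" "(i + 1) mod length ws = 0" by auto
      moreover have "ot (ws ! 0) = u" using w ne by (cases ws) auto
      ultimately show ?thesis using walk_last[OF w ne] ne by (simp add: last_conv_nth)
    qed
  qed
qed

text \<open>If every circuit and every back-and-forth pair of edges has nonnegative cost, then so
  has every closed walk: decompose it into such pieces.\<close>
lemma closed_walk_cost_nonneg:
  fixes c :: "'e oedge \<Rightarrow> real"
  assumes circ: "\<And>C. is_circuit tail head C \<Longrightarrow> 0 \<le> (\<Sum>d\<in>C. c d)"
    and pair: "\<And>d. 0 \<le> c d + c (rev_oedge d)"
    and w: "walk u ws u"
  shows "0 \<le> sum_list (map c ws)"
  using w
proof (induction "length ws" arbitrary: ws u rule: less_induct)
  case less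
  consider "ws = []"
    | "\<not> distinct (map ot ws)"
    | "distinct (map ot ws)" "\<not> distinct (map fst ws)"
    | "ws \<noteq> []" "distinct (map ot ws)" "distinct (map fst ws)"
    by blast
  then show ?case
  proof cases
    case 2
    obtain A a B b C where ws: "ws = A @ a # B @ b # C" and ab: "ot a = ot b"
      using not_distinct_decomp_map[OF 2] by blast
    note split = closed_walk_split[OF less.prems[unfolded ws] ab]
    have "0 \<le> sum_list (map c (a # B))" by (rule less.hyps[OF _ split(1)]) (simp add: ws)
    moreover have "0 \<le> sum_list (map c (A @ b # C))" by (rule less.hyps[OF _ split(2)]) (simp add: ws)
    ultimately show ?thesis using ws by simp
  next
    case 3
    obtain d where "ws = [d, rev_oedge d]" using closed_walk_backtrack[OF less.prems 3] by blast
    then show ?thesis using pair[of d] by simp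
  next
    case 4
    have "distinct ws" using 4 by (simp add: distinct_map)
    then show ?thesis
      using circ[OF closed_walk_circuit[OF less.prems 4]] by (simp add: sum_list_distinct_conv_sum_set)
  qed simp
qed

text \<open>Shortest-walk potentials: on a connected graph without closed walks of negative cost
  there is a potential p with p(head d) \<le> c d + p(tail d) for every oriented edge d.\<close>
lemma feasible_potential_exists:
  fixes c :: "'e oedge \<Rightarrow> real"
  assumes conn: "graph_connected tail head"
    and closed: "\<And>u ws. walk u ws u \<Longrightarrow> 0 \<le> sum_list (map c ws)"
  obtains p where "\<And>d. p (oh d) \<le> c d + p (ot d)"
proof -
  txt \<open>p v is the least cost of a walk from an arbitrary root r to v; it is finite
    because every such walk can be closed up by a return walk.\<close>
  fix r :: 'v
  define S where "S v = {sum_list (map c ws) | ws. walk r ws v}" for v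
  have ne: "S v \<noteq> {}" for v using walk_exists[OF conn, of r v] unfolding S_def by auto
  have bdd: "bdd_below (S v)" for v
  proof -
    obtain ret where ret: "walk v ret r" using walk_exists[OF conn] by blast
    have "- sum_list (map c ret) \<le> s" if s: "s \<in> S v" for s
    proof -
      obtain ws where ws: "s = sum_list (map c ws)" "walk r ws v" using s unfolding S_def by blast
      then have "walk r (ws @ ret) r" using ret unfolding walk_append by blast
      then have "0 \<le> sum_list (map c (ws @ ret))" by (rule closed)
      then show ?thesis using ws(1) by simp
    qed
    then show ?thesis unfolding bdd_below_def by blast
  qed
  have "Inf (S (oh d)) \<le> c d + Inf (S (ot d))" for d
  proof -
    have "Inf (S (oh d)) - c d \<le> Inf (S (ot d))"
    proof (rule cInf_greatest[OF ne])
      fix s assume "s \<in> S (ot d)"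
      then obtain ws where s: "s = sum_list (map c ws)" "walk r ws (ot d)" unfolding S_def by blast
      then have "walk r (ws @ [d]) (oh d)" unfolding walk_append by simp
      then have "sum_list (map c (ws @ [d])) \<in> S (oh d)" unfolding S_def by blast
      then have "Inf (S (oh d)) \<le> sum_list (map c (ws @ [d]))" by (rule cInf_lower[OF _ bdd])
      then show "Inf (S (oh d)) - c d \<le> s" using s by simp
    qed
    then show ?thesis by simp
  qed
  then show ?thesis by (rule that)
qed

definition reduced_cost :: "real^'e \<Rightarrow> ('v \<Rightarrow> real) \<Rightarrow> 'e oedge \<Rightarrow> real" where
  "reduced_cost x p d = edge_cost x d + p (ot d) - p (oh d)"

lemma reduced_cost_rev: "reduced_cost x p d + reduced_cost x p (rev_oedge d) = 2"
  using edge_cost_rev[of x d] unfolding reduced_cost_def by simp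

lemma edge_cost_circuit:
  assumes "is_circuit tail head C"
  shows "(\<Sum>d\<in>C. edge_cost x d) = qf (circuit_vec C) - 2 * (x \<bullet> circuit_vec C)"
  by (simp add: edge_cost_def qf_circuit_vec[OF assms] inner_circuit_vec[OF assms]
      sum_subtractf sum_distrib_left)

text \<open>Potential differences telescope around a circuit.\<close>
lemma reduced_cost_circuit:
  assumes "is_circuit tail head C"
  shows "(\<Sum>d\<in>C. reduced_cost x p d) = (\<Sum>d\<in>C. edge_cost x d)"
proof -
  have inj: "inj_on ot C" "inj_on oh C" and eq: "ot ` C = oh ` C"
    using circuit_basic[OF assms] by auto
  have "(\<Sum>d\<in>C. p (ot d)) = (\<Sum>d\<in>C. p (oh d))"
    using sum.reindex[OF inj(1), of p] sum.reindex[OF inj(2), of p] eq by simp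
  then show ?thesis unfolding reduced_cost_def by (simp add: sum.distrib sum_subtractf)
qed

lemma flow_orthogonal_potential:
  assumes "is_flow tail head mu"
  shows "(\<Sum>e\<in>UNIV. mu $ e * (p (head e) - p (tail e))) = 0"
proof -
  have "0 = (\<Sum>v\<in>UNIV. p v * (\<Sum>d\<in>{d. ot d = v}. ochain mu d))"
    using assms unfolding is_flow_def by simp
  also have "\<dots> = (\<Sum>v\<in>UNIV. \<Sum>d\<in>{d\<in>UNIV. ot d = v}. p (ot d) * ochain mu d)"
    by (simp add: sum_distrib_left)
  also have "\<dots> = (\<Sum>d\<in>UNIV. p (ot d) * ochain mu d)"
    by (rule sum.group) auto
  also have "\<dots> = - (\<Sum>e\<in>UNIV. mu $ e * (p (head e) - p (tail e)))"
    unfolding sum_oedges by (simp add: otail_def ochain_def algebra_simps sum_negf[symmetric])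
  finally show ?thesis by simp
qed

lemma feasible_potential_int_flow:
  assumes feas: "\<And>d. 0 \<le> reduced_cost x p d" and mu: "mu \<in> int_flows tail head"
  shows "2 * (x \<bullet> mu) \<le> qf mu"
proof -
  have edge: "mu $ e * (2 * x $ e + (p (head e) - p (tail e))) \<le> mu $ e * mu $ e" for e
  proof (rule int_mult_le_square)
    show "mu $ e \<in> \<int>" using mu unfolding int_flows_def by simp
    show "\<bar>2 * x $ e + (p (head e) - p (tail e))\<bar> \<le> 1"
      using feas[of "(e, True)"] feas[of "(e, False)"]
      by (simp add: reduced_cost_def edge_cost_def ochain_def otail_def ohead_def)
  qed
  have flow: "is_flow tail head mu" using mu unfolding int_flows_def flows_def by simp
  have "2 * (x \<bullet> mu) = 2 * (x \<bullet> mu) + (\<Sum>e\<in>UNIV. mu $ e * (p (head e) - p (tail e)))"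
    using flow_orthogonal_potential[OF flow] by simp
  also have "\<dots> = (\<Sum>e\<in>UNIV. mu $ e * (2 * x $ e + (p (head e) - p (tail e))))"
    by (simp add: inner_vec_def distrib_left sum.distrib sum_distrib_left mult.commute mult.left_commute)
  also have "\<dots> \<le> qf mu" unfolding qf_def inner_vec_def inner_real_def by (rule sum_mono[OF edge])
  finally show ?thesis .
qed

lemma voronoi_cell_circuit_ineq:
  assumes "x \<in> voronoi_cell tail head" "lam \<in> Xi1 tail head"
  shows "2 * (x \<bullet> lam) \<le> qf lam"
proof -
  have "lam \<in> int_flows tail head" using assms(2) circuit_vec_int_flow unfolding Xi1_def by blast
  then have "qf x \<le> qf (x - lam)" using assms(1) unfolding voronoi_cell_def by blast
  then show ?thesis unfolding qf_diff by simp
qed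

lemma circuit_ineqs_feasible_potential:
  assumes conn: "graph_connected tail head"
    and ineq: "\<And>lam. lam \<in> Xi1 tail head \<Longrightarrow> 2 * (x \<bullet> lam) \<le> qf lam"
  obtains p where "\<And>d. 0 \<le> reduced_cost x p d"
proof -
  have circ: "0 \<le> (\<Sum>d\<in>C. edge_cost x d)" if C: "is_circuit tail head C" for C
  proof -
    have "circuit_vec C \<in> Xi1 tail head" using C unfolding Xi1_def by blast
    then show ?thesis using ineq edge_cost_circuit[OF C, of x] by fastforce
  qed
  have pair: "0 \<le> edge_cost x d + edge_cost x (rev_oedge d)" for d
    using edge_cost_rev[of x d] by simp
  have "0 \<le> sum_list (map (edge_cost x) ws)" if "walk u ws u" for u ws
    by (rule closed_walk_cost_nonneg[OF circ pair that])
  then obtain p where "\<And>d. p (oh d) \<le> edge_cost x d + p (ot d)"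
    using feasible_potential_exists[OF conn] by blast
  then show ?thesis by (intro that) (simp add: reduced_cost_def)
qed

lemma voronoi_cell_circuit_polyhedron:
  assumes conn: "graph_connected tail head"
  shows "voronoi_cell tail head = {x\<in>flows tail head. \<forall>lam\<in>Xi1 tail head. x \<bullet> lam \<le> qf lam / 2}"
proof (intro set_eqI iffI)
  fix x assume "x \<in> voronoi_cell tail head"
  then show "x \<in> {x\<in>flows tail head. \<forall>lam\<in>Xi1 tail head. x \<bullet> lam \<le> qf lam / 2}"
    using voronoi_cell_circuit_ineq[of x] unfolding voronoi_cell_def by fastforce
next
  fix x assume x: "x \<in> {x\<in>flows tail head. \<forall>lam\<in>Xi1 tail head. x \<bullet> lam \<le> qf lam / 2}"
  then have "2 * (x \<bullet> lam) \<le> qf lam" if "lam \<in> Xi1 tail head" for lam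
    using that by auto
  then obtain p where feas: "\<And>d. 0 \<le> reduced_cost x p d"
    using circuit_ineqs_feasible_potential[OF conn] by blast
  have "qf x \<le> qf (x - mu)" if "mu \<in> int_flows tail head" for mu
    using feasible_potential_int_flow[OF feas that] unfolding qf_diff by simp
  then show "x \<in> voronoi_cell tail head"
    using x unfolding voronoi_cell_def by blast
qed

lemma tight_circuit_iff_reduced_zero:
  assumes feas: "\<And>d. 0 \<le> reduced_cost x p d" and C: "is_circuit tail head C"
  shows "2 * (x \<bullet> circuit_vec C) = qf (circuit_vec C) \<longleftrightarrow> (\<forall>d\<in>C. reduced_cost x p d = 0)"
proof -
  have "2 * (x \<bullet> circuit_vec C) = qf (circuit_vec C) \<longleftrightarrow> (\<Sum>d\<in>C. reduced_cost x p d) = 0"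
    using reduced_cost_circuit[OF C] edge_cost_circuit[OF C] by auto
  also have "\<dots> \<longleftrightarrow> (\<forall>d\<in>C. reduced_cost x p d = 0)"
    using sum_nonneg_eq_0_iff[OF circuit_basic(1)[OF C]] feas by blast
  finally show ?thesis .
qed

lemma affine_flows: "affine (flows tail head)"
  unfolding affine_def
proof (intro ballI allI impI)
  fix x y :: "real^'e" and u v :: real
  assume "x \<in> flows tail head" "y \<in> flows tail head"
  moreover have "ochain (u *\<^sub>R x + v *\<^sub>R y) d = u * ochain x d + v * ochain y d" for d
    by (simp add: ochain_def)
  ultimately show "u *\<^sub>R x + v *\<^sub>R y \<in> flows tail head"
    unfolding flows_def is_flow_def by (simp add: sum.distrib sum_distrib_left[symmetric])
qed

definition face_circuits :: "(real^'e) set \<Rightarrow> (real^'e) set" where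
  "face_circuits F = {lam \<in> Xi1 tail head. F \<subseteq> Hlam tail head lam}"

definition face_orientation :: "(real^'e) set \<Rightarrow> 'e oedge set" where
  "face_orientation F = \<Union>{supp lam | lam. lam \<in> face_circuits F}"

lemma phi_eq: "phi tail head F = (fst ` face_orientation F, face_orientation F)"
  unfolding phi_def face_orientation_def face_circuits_def Let_def by simp

lemma face_circuits_tight:
  assumes "F \<subseteq> flows tail head"
  shows "face_circuits F = {lam \<in> Xi1 tail head. \<forall>y\<in>F. y \<bullet> lam = qf lam / 2}"
  using assms unfolding face_circuits_def Hlam_def by auto

lemma face_generic_point:
  assumes conn: "graph_connected tail head" and F: "F \<in> FP tail head"
  obtains x where "x \<in> F"
    "\<And>lam. lam \<in> Xi1 tail head \<Longrightarrow> 2 * (x \<bullet> lam) = qf lam \<longleftrightarrow> lam \<in> face_circuits F"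
proof -
  have face: "F face_of voronoi_cell tail head" "F \<noteq> {}" using F unfolding FP_def by auto
  then have "F \<subseteq> flows tail head"
    using face_of_imp_subset unfolding voronoi_cell_def by blast
  have "x \<bullet> lam \<le> qf lam / 2" if "x \<in> voronoi_cell tail head" "lam \<in> Xi1 tail head" for x lam
    using that unfolding voronoi_cell_circuit_polyhedron[OF conn] by blast
  then obtain x where x: "x \<in> F"
    and eq: "{lam \<in> Xi1 tail head. x \<bullet> lam = qf lam / 2} = {lam \<in> Xi1 tail head. \<forall>y\<in>F. y \<bullet> lam = qf lam / 2}"
    using face_point_with_fewest_tight_constraints[OF finite_Xi1 face, of "\<lambda>lam. qf lam / 2"] by blast
  have "2 * (x \<bullet> lam) = qf lam \<longleftrightarrow> lam \<in> face_circuits F" if "lam \<in> Xi1 tail head" for lam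
  proof -
    have "lam \<in> face_circuits F \<longleftrightarrow> x \<bullet> lam = qf lam / 2"
      using that unfolding face_circuits_tight[OF \<open>F \<subseteq> flows tail head\<close>] eq[symmetric] by simp
    moreover have "x \<bullet> lam = qf lam / 2 \<longleftrightarrow> 2 * (x \<bullet> lam) = qf lam" by linarith
    ultimately show ?thesis by blast
  qed
  then show ?thesis using that x by blast
qed

lemma face_circuits_eq_imp_subset:
  assumes conn: "graph_connected tail head" and F: "F \<in> FP tail head" "G \<in> FP tail head"
    and eq: "face_circuits F = face_circuits G"
  shows "F \<subseteq> G"
proof
  note P = voronoi_cell_circuit_polyhedron[OF conn]
  have G_face: "G face_of voronoi_cell tail head" using F(2) unfolding FP_def by auto
  obtain x where x: "x \<in> G"
    and tight: "\<And>lam. lam \<in> Xi1 tail head \<Longrightarrow> 2 * (x \<bullet> lam) = qf lam \<longleftrightarrow> lam \<in> face_circuits G"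
    using face_generic_point[OF conn F(2)] by blast
  fix y assume y: "y \<in> F"
  then have yV: "y \<in> voronoi_cell tail head" using F(1) face_of_imp_subset unfolding FP_def by blast
  have "y \<bullet> lam = qf lam / 2" if lam: "lam \<in> Xi1 tail head" "x \<bullet> lam = qf lam / 2" for lam
  proof -
    have "lam \<in> face_circuits F" using tight[OF lam(1)] lam(2) eq by simp
    then have "2 * (y \<bullet> lam) = qf lam" using y unfolding face_circuits_def Hlam_def by blast
    then show ?thesis by simp
  qed
  then show "y \<in> G"
    by (rule face_contains_points_tight_where_member_is[OF affine_flows finite_Xi1 P G_face x yV])
qed

lemma face_orientation_mem:
  "d \<in> face_orientation F \<longleftrightarrow> (\<exists>C. is_circuit tail head C \<and> circuit_vec C \<in> face_circuits F \<and> d \<in> C)"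
  unfolding face_orientation_def face_circuits_def Xi1_def using supp_circuit_vec by fastforce

lemma face_potential:
  assumes conn: "graph_connected tail head" and F: "F \<in> FP tail head"
  obtains x p where
    "\<And>C. is_circuit tail head C \<Longrightarrow> circuit_vec C \<in> face_circuits F \<longleftrightarrow> (\<forall>d\<in>C. reduced_cost x p d = 0)"
    "\<And>d. d \<in> face_orientation F \<Longrightarrow> reduced_cost x p d = 0"
proof -
  obtain x where x: "x \<in> F"
    and tight: "\<And>lam. lam \<in> Xi1 tail head \<Longrightarrow> 2 * (x \<bullet> lam) = qf lam \<longleftrightarrow> lam \<in> face_circuits F"
    using face_generic_point[OF conn F] by blast
  have "x \<in> voronoi_cell tail head" using x F face_of_imp_subset unfolding FP_def by blast
  then obtain p where feas: "\<And>d. 0 \<le> reduced_cost x p d"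
    using circuit_ineqs_feasible_potential[OF conn] voronoi_cell_circuit_ineq by blast
  have circ: "circuit_vec C \<in> face_circuits F \<longleftrightarrow> (\<forall>d\<in>C. reduced_cost x p d = 0)"
    if C: "is_circuit tail head C" for C
    using tight[of "circuit_vec C"] tight_circuit_iff_reduced_zero[OF feas C] C unfolding Xi1_def by blast
  have "reduced_cost x p d = 0" if d: "d \<in> face_orientation F" for d
  proof -
    obtain C where "is_circuit tail head C" "circuit_vec C \<in> face_circuits F" "d \<in> C"
      using d unfolding face_orientation_mem by blast
    then show ?thesis using circ by blast
  qed
  with circ show ?thesis by (rule that)
qed

text \<open>As opposite edges have reduced costs summing to 2, the orientation attached to a face
  contains no opposite pair.\<close>
lemma face_orientation_no_rev:
  assumes conn: "graph_connected tail head" and F: "F \<in> FP tail head"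
    and d: "d \<in> face_orientation F"
  shows "rev_oedge d \<notin> face_orientation F"
proof
  obtain x p where
    "\<And>C. is_circuit tail head C \<Longrightarrow> circuit_vec C \<in> face_circuits F \<longleftrightarrow> (\<forall>d\<in>C. reduced_cost x p d = 0)"
    and zero: "\<And>d. d \<in> face_orientation F \<Longrightarrow> reduced_cost x p d = 0"
    by (rule face_potential[OF conn F]) blast
  assume r: "rev_oedge d \<in> face_orientation F"
  show False using reduced_cost_rev[of x p d] zero[OF d] zero[OF r] by simp
qed

lemma face_circuits_eq:
  assumes conn: "graph_connected tail head" and F: "F \<in> FP tail head"
  shows "face_circuits F = {lam \<in> Xi1 tail head. supp lam \<subseteq> face_orientation F}"
proof (intro set_eqI iffI)
  fix lam assume "lam \<in> face_circuits F"
  then show "lam \<in> {lam \<in> Xi1 tail head. supp lam \<subseteq> face_orientation F}"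
    unfolding face_orientation_def face_circuits_def by blast
next
  fix lam assume lam: "lam \<in> {lam \<in> Xi1 tail head. supp lam \<subseteq> face_orientation F}"
  then obtain C where C: "is_circuit tail head C" "lam = circuit_vec C"
    unfolding Xi1_def by blast
  then have sub: "C \<subseteq> face_orientation F" using lam supp_circuit_vec[OF C(1)] by simp
  obtain x p where
    circ: "\<And>C. is_circuit tail head C \<Longrightarrow> circuit_vec C \<in> face_circuits F \<longleftrightarrow> (\<forall>d\<in>C. reduced_cost x p d = 0)"
    and zero: "\<And>d. d \<in> face_orientation F \<Longrightarrow> reduced_cost x p d = 0"
    by (rule face_potential[OF conn F]) blast
  have "\<forall>d\<in>C. reduced_cost x p d = 0" using zero sub by blast
  then show "lam \<in> face_circuits F" using circ[OF C(1)] C(2) by simp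
qed

text \<open>The orientation attached to a face is a union of circuits.\<close>
lemma face_orientation_back_path:
  assumes "d \<in> face_orientation F"
  shows "(oh d, ot d) \<in> (arcs (face_orientation F))\<^sup>*"
proof -
  obtain C where C: "is_circuit tail head C" "circuit_vec C \<in> face_circuits F" "d \<in> C"
    using assms unfolding face_orientation_mem by blast
  then have "arcs C \<subseteq> arcs (face_orientation F)"
    unfolding arcs_def face_orientation_mem by blast
  then show ?thesis using circuit_back_path[OF C(1,3)] rtrancl_mono by blast
qed

lemma face_orientation_antimono:
  "F \<subseteq> G \<Longrightarrow> face_orientation G \<subseteq> face_orientation F"
  unfolding face_orientation_def face_circuits_def by blast

end

theorem mainTheorem7:
  fixes tail head :: "'e::finite \<Rightarrow> 'v::finite"
  assumes "graph_connected tail head"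
  shows "(\<forall>F\<in>FP tail head. phi tail head F \<in> SC tail head)
       \<and> inj_on (phi tail head) (FP tail head)
       \<and> (\<forall>F1\<in>FP tail head. \<forall>F2\<in>FP tail head. F1 \<subseteq> F2 \<longrightarrow> sc_le (phi tail head F1) (phi tail head F2))"
proof (intro conjI ballI impI inj_onI)
  fix F assume F: "F \<in> FP tail head"
  show "phi tail head F \<in> SC tail head"
    unfolding phi_eq SC_def
    using strongly_connected_of_back_paths[OF face_orientation_no_rev[OF assms F] face_orientation_back_path]
    by simp
next
  fix F G assume F: "F \<in> FP tail head" and G: "G \<in> FP tail head"
    and "phi tail head F = phi tail head G"
  then have "face_orientation tail head F = face_orientation tail head G" unfolding phi_eq by simp
  then have "face_circuits tail head F = face_circuits tail head G"
    unfolding face_circuits_eq[OF assms F] face_circuits_eq[OF assms G] by simp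
  then show "F = G" using face_circuits_eq_imp_subset[OF assms] F G by (metis subset_antisym)
next
  fix F G assume F: "F \<in> FP tail head" and "G \<in> FP tail head" "F \<subseteq> G"
  then show "sc_le (phi tail head F) (phi tail head G)"
    unfolding phi_eq
    using sc_le_of_subset[OF face_orientation_no_rev[OF assms F] face_orientation_antimono] by blast
qed

end
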